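(* Let $L$ be a totally ordered multiplicative lattice and $m$ a positive integer. (1) If $\{q_\lambda\}_{\lambda\in\Lambda}$ is a family of quasi $m$-absorbing elements of $L$, then $\bigwedge_{\lambda\in\Lambda}q_\lambda$ is a quasi $m$-absorbing element of $L$. (2) If $\{q_\lambda\}_{\lambda\in\Lambda}$ is a family of weakly quasi $m$-absorbing elements of $L$, then $\bigwedge_{\lambda\in\Lambda}q_\lambda$ is a weakly quasi $m$-absorbing element of $L$.
   Context: A multiplicative lattice is a complete lattice $L$ with least element $0$ and compact greatest element $1$, equipped with a commutative, associative product that distributes over arbitrary joins and has $1$ as multiplicative identity; $L$ is totally ordered if any two elements are comparable. An element $a$ is compact if $a\le\bigvee_{\alpha\in I}a_\alpha$ implies $a\le\bigvee_{\alpha\in I_0}a_\alpha$ for some finite $I_0\subseteq I$; $L_*$ denotes the set of compact elements. $a^0=1$. A proper element $q$ ($q<1$) is quasi $m$-absorbing if whenever $a^mb\le q$ for some $a,b\in L_*$, then $a^m\le q$ or $a^{m-1}b\le q$; it is weakly quasi $m$-absorbing if whenever $0\ne a^mb\le q$ for some $a,b\in L_*$, then $a^m\le q$ or $a^{m-1}b\le q$. *)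

theory Defs
  imports Main
begin

text \<open>A multiplicative lattice: the complete lattice structure is that of the type
  (least element bot = 0, greatest element top = 1); the product is the function mult.\<close>

definition compact_el :: "'a::complete_lattice \<Rightarrow> bool" where
  "compact_el a \<longleftrightarrow> 
     (\<forall>A::'a set. a \<le> Sup A \<longrightarrow> (\<exists>B. finite B \<and> B \<subseteq> A \<and> a \<le> Sup B))"

definition mult_lattice :: "('a::complete_lattice \<Rightarrow> 'a \<Rightarrow> 'a) \<Rightarrow> bool" where
  "mult_lattice mult \<longleftrightarrow>
     compact_el (top::'a) \<and>
     (\<forall>a b. mult a b = mult b a) \<and>
     (\<forall>a b c. mult (mult a b) c = mult a (mult b c)) \<and>
     (\<forall>a (A::'a set). mult a (Sup A) = Sup ((\<lambda>b. mult a b) ` A)) \<and>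
     (\<forall>a. mult top a = a)"

primrec mpow :: "('a::complete_lattice \<Rightarrow> 'a \<Rightarrow> 'a) \<Rightarrow> 'a \<Rightarrow> nat \<Rightarrow> 'a" where
  "mpow mult a 0 = top"
| "mpow mult a (Suc n) = mult a (mpow mult a n)"

definition quasi_m_absorbing ::
  "('a::complete_lattice \<Rightarrow> 'a \<Rightarrow> 'a) \<Rightarrow> nat \<Rightarrow> 'a \<Rightarrow> bool" where
  "quasi_m_absorbing mult m q \<longleftrightarrow> q < top \<and>
     (\<forall>a b. compact_el a \<longrightarrow> compact_el b \<longrightarrow> mult (mpow mult a m) b \<le> q \<longrightarrow>
        mpow mult a m \<le> q \<or> mult (mpow mult a (m - 1)) b \<le> q)"

definition weakly_quasi_m_absorbing ::
  "('a::complete_lattice \<Rightarrow> 'a \<Rightarrow> 'a) \<Rightarrow> nat \<Rightarrow> 'a \<Rightarrow> bool" where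
  "weakly_quasi_m_absorbing mult m q \<longleftrightarrow> q < top \<and>
     (\<forall>a b. compact_el a \<longrightarrow> compact_el b \<longrightarrow>
        mult (mpow mult a m) b \<noteq> bot \<longrightarrow> mult (mpow mult a m) b \<le> q \<longrightarrow>
        mpow mult a m \<le> q \<or> mult (mpow mult a (m - 1)) b \<le> q)"

end

theory Submission
  imports Defs
begin

text \<open>In a chain, if each \<open>q l\<close> lies above \<open>x\<close> or above \<open>y\<close>, then so does the meet of
  all of them: otherwise some \<open>q l\<^sub>1\<close> misses \<open>x\<close> and some \<open>q l\<^sub>2\<close> misses \<open>y\<close>, and
  whichever of \<open>q l\<^sub>1\<close>, \<open>q l\<^sub>2\<close> is smaller misses both. The absorbing conditions are
  such disjunctions, so they pass to meets.\<close>

lemma le_INF_disj: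
  fixes q :: "'i \<Rightarrow> 'a::complete_linorder"
  assumes "\<forall>l\<in>\<Lambda>. x \<le> q l \<or> y \<le> q l"
  shows "x \<le> (INF l\<in>\<Lambda>. q l) \<or> y \<le> (INF l\<in>\<Lambda>. q l)"
proof (rule ccontr)
  assume "\<not> ?thesis"
  then obtain l\<^sub>1 l\<^sub>2 where "l\<^sub>1 \<in> \<Lambda>" "\<not> x \<le> q l\<^sub>1" and "l\<^sub>2 \<in> \<Lambda>" "\<not> y \<le> q l\<^sub>2"
    by (auto simp: le_INF_iff)
  with assms have "y \<le> q l\<^sub>1" "x \<le> q l\<^sub>2" by auto
  with \<open>\<not> x \<le> q l\<^sub>1\<close> \<open>\<not> y \<le> q l\<^sub>2\<close> show False
    by (meson linear order_trans)
qed

lemma INF_less_top: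
  fixes q :: "'i \<Rightarrow> 'a::complete_lattice"
  assumes "l \<in> \<Lambda>" "q l < top"
  shows "(INF l\<in>\<Lambda>. q l) < top"
  using INF_lower[OF assms(1)] assms(2) by (rule le_less_trans)

lemma quasi_m_absorbing_INF:
  fixes q :: "'i \<Rightarrow> 'a::complete_linorder"
  assumes "\<Lambda> \<noteq> {}" and "\<forall>l\<in>\<Lambda>. quasi_m_absorbing mult m (q l)"
  shows "quasi_m_absorbing mult m (INF l\<in>\<Lambda>. q l)"
  unfolding quasi_m_absorbing_def
proof (intro conjI allI impI)
  from assms show "(INF l\<in>\<Lambda>. q l) < top"
    by (auto intro: INF_less_top simp: quasi_m_absorbing_def)
next
  fix a b :: 'a
  assume "compact_el a" "compact_el b" "mult (mpow mult a m) b \<le> (INF l\<in>\<Lambda>. q l)"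
  with assms(2) show "mpow mult a m \<le> (INF l\<in>\<Lambda>. q l)
      \<or> mult (mpow mult a (m - 1)) b \<le> (INF l\<in>\<Lambda>. q l)"
    by (intro le_INF_disj) (auto simp: quasi_m_absorbing_def le_INF_iff)
qed

lemma weakly_quasi_m_absorbing_INF:
  fixes q :: "'i \<Rightarrow> 'a::complete_linorder"
  assumes "\<Lambda> \<noteq> {}" and "\<forall>l\<in>\<Lambda>. weakly_quasi_m_absorbing mult m (q l)"
  shows "weakly_quasi_m_absorbing mult m (INF l\<in>\<Lambda>. q l)"
  unfolding weakly_quasi_m_absorbing_def
proof (intro conjI allI impI)
  from assms show "(INF l\<in>\<Lambda>. q l) < top"
    by (auto intro: INF_less_top simp: weakly_quasi_m_absorbing_def)
next
  fix a b :: 'a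
  assume "compact_el a" "compact_el b" "mult (mpow mult a m) b \<noteq> bot"
    "mult (mpow mult a m) b \<le> (INF l\<in>\<Lambda>. q l)"
  with assms(2) show "mpow mult a m \<le> (INF l\<in>\<Lambda>. q l)
      \<or> mult (mpow mult a (m - 1)) b \<le> (INF l\<in>\<Lambda>. q l)"
    by (intro le_INF_disj) (auto simp: weakly_quasi_m_absorbing_def le_INF_iff)
qed

theorem mainTheorem7:
  fixes mult :: "'a::complete_linorder \<Rightarrow> 'a \<Rightarrow> 'a"
    and m :: nat and \<Lambda> :: "'i set" and q :: "'i \<Rightarrow> 'a"
  assumes "mult_lattice mult" and "m > 0" and "\<Lambda> \<noteq> {}"
  shows "((\<forall>l\<in>\<Lambda>. quasi_m_absorbing mult m (q l))
           \<longrightarrow> quasi_m_absorbing mult m (INF l\<in>\<Lambda>. q l))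
         \<and> ((\<forall>l\<in>\<Lambda>. weakly_quasi_m_absorbing mult m (q l))
           \<longrightarrow> weakly_quasi_m_absorbing mult m (INF l\<in>\<Lambda>. q l))"
  using quasi_m_absorbing_INF[OF assms(3)] weakly_quasi_m_absorbing_INF[OF assms(3)]
  by blast

end
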